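(* Let $N\ge 1$, let $G:\mathbb{R}_{\ge 0}\to\mathbb{R}_{\ge 0}$ be strictly convex and increasing with $G(0)=0$, and let $w_0,\dots,w_{N-1}>0$ be known demands. Consider the problem $$\min_{u\in\mathbb{R}_{\ge 0}^N}\ \sum_{k=0}^{N-1}G(u_k)\quad\text{s.t.}\quad \sum_{j=0}^{k}u_j\ \ge\ \sum_{j=0}^{k}w_j\quad\text{for all }k\in\{0,\dots,N-1\}.$$ (Equivalently: minimize $\sum_k G(u_k)$ subject to $x_0=0$, $x_{k+1}=x_k+u_k-w_k$, $x_k\ge 0$ for $k=1,\dots,N$.) Then $u^*=\mathrm{LS}(w_0,\dots,w_{N-1})$ is the optimal solution of this problem. Moreover, the optimal trajectory is non-increasing: $u^*_{k+1}\le u^*_k$ for all $k\in\{0,\dots,N-2\}$.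
   Context: Block-averaging (load shifting) procedure $\mathrm{LS}$: given a finite sequence $v=(v_0,\dots,v_{N-1})$ of positive reals, define indices $0=k_0<k_1<\dots<k_n=N$ recursively: if $k_l<N$, let $k_{l+1}=k_l+j^*$, where $j^*$ is the largest element of $\arg\max_{j\in\{1,\dots,N-k_l\}}\frac{1}{j}\sum_{i=k_l}^{k_l+j-1}v_i$; stop when $k_n=N$. Then $\mathrm{LS}(v)=(u_0,\dots,u_{N-1})$ with $u_i=\frac{1}{k_{l+1}-k_l}\sum_{m=k_l}^{k_{l+1}-1}v_m$ for all $k_l\le i<k_{l+1}$, $l=0,\dots,n-1$. (The paper's $\textsc{LoadShift}(\bm w,0,0)$ is $\mathrm{LS}(w)$.) *)

theory Defs
  imports "HOL-Analysis.Analysis"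
begin

definition strict_convex_on :: "real set \<Rightarrow> (real \<Rightarrow> real) \<Rightarrow> bool" where
  "strict_convex_on S f \<longleftrightarrow> convex S \<and>
    (\<forall>x\<in>S. \<forall>y\<in>S. \<forall>t. x \<noteq> y \<longrightarrow> 0 < t \<longrightarrow> t < 1 \<longrightarrow>
       f (t * x + (1 - t) * y) < t * f x + (1 - t) * f y)"

definition blk_avg :: "(nat \<Rightarrow> real) \<Rightarrow> nat \<Rightarrow> nat \<Rightarrow> real" where
  "blk_avg v k j = (\<Sum>i=k..<k+j. v i) / real j"

definition jstar :: "(nat \<Rightarrow> real) \<Rightarrow> nat \<Rightarrow> nat \<Rightarrow> nat" where
  "jstar v N k = Max {j \<in> {1..N-k}. \<forall>j'\<in>{1..N-k}. blk_avg v k j' \<le> blk_avg v k j}"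

lemma jstar_pos:
  assumes "k < N" shows "jstar v N k \<ge> 1"
proof -
  let ?A = "{1..N-k}"
  have fin: "finite ?A" and ne: "?A \<noteq> {}" using assms by auto
  have "Max (blk_avg v k ` ?A) \<in> blk_avg v k ` ?A" using fin ne by (intro Max_in) auto
  then obtain j where j: "j \<in> ?A" "blk_avg v k j = Max (blk_avg v k ` ?A)" by auto
  have jm: "\<forall>j'\<in>?A. blk_avg v k j' \<le> blk_avg v k j" using j fin by auto
  let ?S = "{j \<in> ?A. \<forall>j'\<in>?A. blk_avg v k j' \<le> blk_avg v k j}"
  have "j \<in> ?S" using j jm by auto
  moreover have "finite ?S" using fin by auto
  ultimately have "j \<le> Max ?S" by (simp add: Max_ge)
  hence "j \<le> jstar v N k" unfolding jstar_def .
  thus ?thesis using j(1) by auto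
qed

function ls_from :: "(nat \<Rightarrow> real) \<Rightarrow> nat \<Rightarrow> nat \<Rightarrow> nat \<Rightarrow> real" where
  "ls_from v N k i =
     (if N \<le> k then 0
      else if i < k + jstar v N k then blk_avg v k (jstar v N k)
      else ls_from v N (k + jstar v N k) i)"
  by pat_completeness auto
termination
  by (relation "Wellfounded.measure (\<lambda>(v, N, k, i). N - k)")
     (auto, metis jstar_pos not_le diff_less_mono2 less_add_same_cancel1 less_le_trans zero_less_one
        add_diff_cancel_left' diff_diff_left zero_less_diff)

text \<open>The block-averaging procedure LS(v_0,...,v_{N-1}); values outside {0..<N} are irrelevant (set to 0).\<close>
definition LS :: "(nat \<Rightarrow> real) \<Rightarrow> nat \<Rightarrow> nat \<Rightarrow> real" where
  "LS v N = ls_from v N 0"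

definition feasible :: "(nat \<Rightarrow> real) \<Rightarrow> nat \<Rightarrow> (nat \<Rightarrow> real) \<Rightarrow> bool" where
  "feasible w N u \<longleftrightarrow> (\<forall>k<N. u k \<ge> 0) \<and>
     (\<forall>k<N. (\<Sum>j\<le>k. u j) \<ge> (\<Sum>j\<le>k. w j))"

end

(*
  LS cuts the horizon into blocks on which it is constant, equal to the average of w over the
  block, each block having maximal average among all initial segments of the remaining suffix.
  Hence the block values are nonincreasing, and every prefix sum of LS dominates that of w, with
  equality at block ends. Writing L = LS w, for feasible u convexity gives G (u k) >= G (L k) + c k * (u k - L k)
  with c k the left derivative of G at L k. The weights c k are nonnegative, nonincreasing and
  constant on blocks, so summation by parts turns the sum of c k * (u k - L k) into a nonnegative
  combination of prefix sums of u - L taken at block ends, which are nonnegative by feasibility.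
  Uniqueness follows from strict convexity by averaging two minimisers.
*)

theory Submission
  imports Defs
begin

section \<open>Convex functions on the half-line\<close>

lemma strict_convex_onD:
  assumes "strict_convex_on S f" "x \<in> S" "y \<in> S" "x \<noteq> y" "0 < t" "t < 1"
  shows "f (t * x + (1 - t) * y) < t * f x + (1 - t) * f y"
  using assms unfolding strict_convex_on_def by blast

lemma strict_convex_on_imp_convex_on:
  assumes "strict_convex_on S f"
  shows "convex_on S f"
proof
  show "convex S" using assms unfolding strict_convex_on_def by blast
  fix t :: real and x y assume "0 < t" "t < 1" "x \<in> S" "y \<in> S"
  then show "f ((1 - t) *\<^sub>R x + t *\<^sub>R y) \<le> (1 - t) * f x + t * f y"
    using strict_convex_onD[OF assms, of x y "1 - t"] by (cases "x = y") (auto simp: algebra_simps)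
qed

lemma strict_convex_on_midpoint:
  assumes "strict_convex_on S f" "x \<in> S" "y \<in> S" "x \<noteq> y"
  shows "f ((x + y) / 2) < (f x + f y) / 2"
  using strict_convex_onD[OF assms, of "1/2"] by (simp add: field_simps)

lemma convex_on_diff_quot_mono:
  fixes f :: "real \<Rightarrow> real"
  assumes "convex_on I f" "y \<in> I" "x \<in> I" "y < a" "a < x"
  shows "(f a - f y) / (a - y) \<le> (f x - f a) / (x - a)"
proof -
  have swap: "(f u - f v) / (u - v) = (f v - f u) / (v - u)" for u v
    by (metis minus_diff_eq minus_divide_divide)
  show ?thesis
    using order_trans[OF convex_on_slope_le[OF assms]] by (simp only: swap[of y a] swap[of a x])
qed

text \<open>The left derivative of a convex function at \<open>a > 0\<close>: a subgradient that is monotone in \<open>a\<close>.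
  For \<open>a \<le> 0\<close> the supremum is over the empty set and the value is junk.\<close>
definition left_slope :: "(real \<Rightarrow> real) \<Rightarrow> real \<Rightarrow> real" where
  "left_slope f a = (SUP y\<in>{0..<a}. (f a - f y) / (a - y))"

lemma diff_quot_le_left_slope:
  assumes "convex_on {0..} f" "0 \<le> y" "y < a"
  shows "(f a - f y) / (a - y) \<le> left_slope f a"
  unfolding left_slope_def
proof (rule cSUP_upper)
  show "bdd_above ((\<lambda>y. (f a - f y) / (a - y)) ` {0..<a})"
    using convex_on_diff_quot_mono[OF assms(1), of _ "a + 1" a] assms(2,3)
    by (intro bdd_aboveI2[of _ _ "(f (a + 1) - f a) / (a + 1 - a)"]) auto
qed (use assms in auto)

lemma left_slope_le_diff_quot:
  assumes "convex_on {0..} f" "0 < a" "a < x"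
  shows "left_slope f a \<le> (f x - f a) / (x - a)"
  unfolding left_slope_def
  using assms by (intro cSUP_least) (auto intro: convex_on_diff_quot_mono)

lemma convex_on_left_slope_le:
  assumes f: "convex_on {0..} f" and a: "0 < a" and x: "0 \<le> x"
  shows "f a + left_slope f a * (x - a) \<le> f x"
proof (cases x a rule: linorder_cases)
  case less
  with diff_quot_le_left_slope[OF f x] have "f a - f x \<le> left_slope f a * (a - x)"
    by (simp add: divide_simps)
  then show ?thesis by (simp add: algebra_simps)
next
  case greater
  with left_slope_le_diff_quot[OF f a] have "left_slope f a * (x - a) \<le> f x - f a"
    by (simp add: divide_simps)
  then show ?thesis by simp
qed simp

lemma left_slope_mono:
  assumes f: "convex_on {0..} f" and "0 < a" "a \<le> b"
  shows "left_slope f a \<le> left_slope f b"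
proof (cases "a = b")
  case False
  with assms have "left_slope f a \<le> (f b - f a) / (b - a)"
    by (intro left_slope_le_diff_quot) auto
  also have "\<dots> \<le> left_slope f b"
    using False assms by (intro diff_quot_le_left_slope) auto
  finally show ?thesis .
qed simp

lemma left_slope_nonneg:
  assumes "convex_on {0..} f" "mono_on {0..} f" "0 < a"
  shows "0 \<le> left_slope f a"
proof -
  have "0 \<le> (f a - f 0) / (a - 0)"
    using assms(2,3) by (auto dest: mono_onD[of _ f 0 a])
  also have "\<dots> \<le> left_slope f a"
    using assms by (intro diff_quot_le_left_slope) auto
  finally show ?thesis .
qed

section \<open>The block-averaging procedure\<close>

declare ls_from.simps[simp del]

lemma jstar_argmax:
  assumes "k < N"
  shows "jstar v N k \<in> {j \<in> {1..N-k}. \<forall>j'\<in>{1..N-k}. blk_avg v k j' \<le> blk_avg v k j}"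
    (is "_ \<in> ?S")
proof -
  have fin: "finite {1..N-k}" and ne: "{1..N-k} \<noteq> {}" using assms by auto
  have "Max (blk_avg v k ` {1..N-k}) \<in> blk_avg v k ` {1..N-k}"
    using fin ne by (intro Max_in) auto
  then obtain j where "j \<in> {1..N-k}" "blk_avg v k j = Max (blk_avg v k ` {1..N-k})"
    by auto
  with fin have "j \<in> ?S" by auto
  then have "Max ?S \<in> ?S" by (intro Max_in) auto
  then show ?thesis unfolding jstar_def .
qed

lemma jstar_bounds:
  assumes "k < N"
  shows "1 \<le> jstar v N k" "k + jstar v N k \<le> N"
  using jstar_argmax[OF assms, of v] assms by auto

lemma blk_avg_le_jstar:
  assumes "k < N" "1 \<le> j" "k + j \<le> N"
  shows "blk_avg v k j \<le> blk_avg v k (jstar v N k)"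
  using jstar_argmax[OF assms(1)] assms(2,3) by auto

lemma ls_from_block:
  "k < N \<Longrightarrow> i < k + jstar v N k \<Longrightarrow> ls_from v N k i = blk_avg v k (jstar v N k)"
  by (subst ls_from.simps) auto

lemma ls_from_after_block:
  "k < N \<Longrightarrow> k + jstar v N k \<le> i \<Longrightarrow> ls_from v N k i = ls_from v N (k + jstar v N k) i"
  by (subst ls_from.simps) auto

lemma ls_from_breakpoint_induct [case_names step]:
  assumes "\<And>k. (k < N \<Longrightarrow> P (k + jstar v N k)) \<Longrightarrow> P k"
  shows "P k"
proof (induction "N - k" arbitrary: k rule: less_induct)
  case less
  show ?case
  proof (rule assms)
    assume "k < N"
    then show "P (k + jstar v N k)"
      using jstar_bounds[OF \<open>k < N\<close>, of v] by (intro less.hyps) linarith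
  qed
qed

lemma sum_blk_avg: "real j * blk_avg v k j = (\<Sum>i=k..<k+j. v i)"
  by (cases "j = 0") (simp_all add: blk_avg_def)

lemma sum_ls_from_block:
  assumes "k < N"
  shows "(\<Sum>i=k..<k + jstar v N k. ls_from v N k i) = (\<Sum>i=k..<k + jstar v N k. v i)"
proof -
  have "(\<Sum>i=k..<k + jstar v N k. ls_from v N k i) = (\<Sum>i=k..<k + jstar v N k. blk_avg v k (jstar v N k))"
    using ls_from_block[OF assms] by (intro sum.cong) auto
  then show ?thesis by (simp add: sum_blk_avg)
qed

lemma ls_from_pos:
  assumes "\<forall>i<N. 0 < v i"
  shows "k \<le> i \<Longrightarrow> i < N \<Longrightarrow> 0 < ls_from v N k i"
proof (induction k rule: ls_from_breakpoint_induct[where N = N and v = v])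
  case (step k)
  then have "k < N" by simp
  show ?case
  proof (cases "i < k + jstar v N k")
    case True
    have "0 < (\<Sum>i=k..<k + jstar v N k. v i)" "0 < jstar v N k"
      using assms jstar_bounds[OF \<open>k < N\<close>, of v] by (auto intro: sum_pos)
    then show ?thesis
      using ls_from_block[OF \<open>k < N\<close> True] unfolding blk_avg_def by simp
  next
    case False
    then show ?thesis using step ls_from_after_block[OF \<open>k < N\<close>] by simp
  qed
qed

lemma sum_ls_from_ge:
  "k < m \<Longrightarrow> m \<le> N \<Longrightarrow> (\<Sum>i=k..<m. v i) \<le> (\<Sum>i=k..<m. ls_from v N k i)"
proof (induction k rule: ls_from_breakpoint_induct[where N = N and v = v])
  case (step k)
  then have "k < N" by simp
  define j where "j = jstar v N k"
  show ?case
  proof (cases "m \<le> k + j")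
    case True
    have "(\<Sum>i=k..<m. v i) = real (m - k) * blk_avg v k (m - k)"
      using sum_blk_avg[of "m - k" v k] step.prems by simp
    also have "\<dots> \<le> real (m - k) * blk_avg v k j"
      unfolding j_def using step.prems by (intro mult_left_mono blk_avg_le_jstar) auto
    also have "\<dots> = (\<Sum>i=k..<m. ls_from v N k i)"
      using ls_from_block[OF \<open>k < N\<close>] True step.prems unfolding j_def by simp
    finally show ?thesis .
  next
    case False
    have "(\<Sum>i=k+j..<m. v i) \<le> (\<Sum>i=k+j..<m. ls_from v N (k + j) i)"
      using step False jstar_bounds[OF \<open>k < N\<close>, of v] unfolding j_def by simp
    also have "\<dots> = (\<Sum>i=k+j..<m. ls_from v N k i)"
      using ls_from_after_block[OF \<open>k < N\<close>] unfolding j_def by simp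
    finally show ?thesis
      using sum_ls_from_block[OF \<open>k < N\<close>] False
        sum.atLeastLessThan_concat[of k "k + j" m v] sum.atLeastLessThan_concat[of k "k + j" m "ls_from v N k"]
      unfolding j_def by simp
  qed
qed

text \<open>Otherwise appending this segment to the block would raise its average.\<close>
lemma blk_avg_after_block_le:
  assumes "k < N" "1 \<le> j'" "k + jstar v N k + j' \<le> N"
  shows "blk_avg v (k + jstar v N k) j' \<le> blk_avg v k (jstar v N k)"
proof -
  define j where "j = jstar v N k"
  define a where "a = blk_avg v k j"
  have "real j * a + real j' * blk_avg v (k + j) j' = real (j + j') * blk_avg v k (j + j')"
    unfolding a_def sum_blk_avg by (simp add: add.assoc sum.atLeastLessThan_concat)
  also have "\<dots> \<le> real (j + j') * a"
    unfolding a_def j_def using assms by (intro mult_left_mono blk_avg_le_jstar) auto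
  finally have "real j' * blk_avg v (k + j) j' \<le> real j' * a"
    by (simp add: algebra_simps)
  then show ?thesis
    using assms(2) unfolding a_def j_def by simp
qed

lemma ls_from_antimono:
  "k \<le> i \<Longrightarrow> Suc i < N \<Longrightarrow> ls_from v N k (Suc i) \<le> ls_from v N k i"
proof (induction k rule: ls_from_breakpoint_induct[where N = N and v = v])
  case (step k)
  then have "k < N" by simp
  define j where "j = jstar v N k"
  consider "Suc i < k + j" | "Suc i = k + j" | "k + j \<le> i" by linarith
  then show ?case
  proof cases
    case 1
    then show ?thesis using ls_from_block[OF \<open>k < N\<close>] unfolding j_def by simp
  next
    case 2
    have "ls_from v N k (Suc i) = ls_from v N (k + j) (k + j)"
      using ls_from_after_block[OF \<open>k < N\<close>] 2 unfolding j_def by simp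
    also have "\<dots> = blk_avg v (k + j) (jstar v N (k + j))"
      using jstar_bounds[of "k + j" N v] 2 step.prems by (intro ls_from_block) auto
    also have "\<dots> \<le> blk_avg v k j"
      using jstar_bounds[of "k + j" N v] 2 step.prems unfolding j_def
      by (intro blk_avg_after_block_le) auto
    also have "\<dots> = ls_from v N k i"
      using ls_from_block[OF \<open>k < N\<close>] 2 unfolding j_def by simp
    finally show ?thesis .
  next
    case 3
    then show ?thesis
      using step jstar_bounds[OF \<open>k < N\<close>, of v] ls_from_after_block[OF \<open>k < N\<close>, of v]
      unfolding j_def by simp
  qed
qed

lemma ls_from_const_or_tight:
  "k \<le> i \<Longrightarrow> i < N \<Longrightarrow>
    (Suc i < N \<and> ls_from v N k (Suc i) = ls_from v N k i)
    \<or> (\<Sum>j=k..<Suc i. ls_from v N k j) = (\<Sum>j=k..<Suc i. v j)"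
proof (induction k rule: ls_from_breakpoint_induct[where N = N and v = v])
  case (step k)
  then have "k < N" by simp
  define j where "j = jstar v N k"
  have "k + j \<le> N" using jstar_bounds[OF \<open>k < N\<close>, of v] unfolding j_def by simp
  consider "Suc i < k + j" | "Suc i = k + j" | "k + j \<le> i" by linarith
  then show ?case
  proof cases
    case 1
    then show ?thesis using ls_from_block[OF \<open>k < N\<close>] \<open>k + j \<le> N\<close> unfolding j_def by simp
  next
    case 2
    then show ?thesis using sum_ls_from_block[OF \<open>k < N\<close>] unfolding j_def by simp
  next
    case 3
    have after: "ls_from v N k l = ls_from v N (k + j) l" if "k + j \<le> l" for l
      using ls_from_after_block[OF \<open>k < N\<close>] that unfolding j_def by simp
    have "(Suc i < N \<and> ls_from v N (k + j) (Suc i) = ls_from v N (k + j) i)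
      \<or> (\<Sum>l=k+j..<Suc i. ls_from v N (k + j) l) = (\<Sum>l=k+j..<Suc i. v l)"
      using step 3 \<open>k + j \<le> N\<close> unfolding j_def by simp
    moreover have "(\<Sum>l=k+j..<Suc i. ls_from v N (k + j) l) = (\<Sum>l=k+j..<Suc i. ls_from v N k l)"
      using after by simp
    ultimately show ?thesis
      using 3 after[of i] after[of "Suc i"] sum_ls_from_block[OF \<open>k < N\<close>]
        sum.atLeastLessThan_concat[of k "k + j" "Suc i" v]
        sum.atLeastLessThan_concat[of k "k + j" "Suc i" "ls_from v N k"]
      unfolding j_def by auto
  qed
qed

lemma LS_pos: "\<forall>i<N. 0 < w i \<Longrightarrow> k < N \<Longrightarrow> 0 < LS w N k"
  unfolding LS_def by (rule ls_from_pos) auto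

lemma LS_antimono: "Suc k < N \<Longrightarrow> LS w N (Suc k) \<le> LS w N k"
  unfolding LS_def by (rule ls_from_antimono) auto

lemma feasible_LS:
  assumes "\<forall>i<N. 0 < w i"
  shows "feasible w N (LS w N)"
  unfolding feasible_def
proof (intro conjI allI impI)
  fix k assume "k < N"
  then show "0 \<le> LS w N k" using LS_pos[OF assms] less_imp_le by blast
  have "(\<Sum>j=0..<Suc k. w j) \<le> (\<Sum>j=0..<Suc k. LS w N j)"
    using \<open>k < N\<close> unfolding LS_def by (intro sum_ls_from_ge) auto
  then show "(\<Sum>j\<le>k. w j) \<le> (\<Sum>j\<le>k. LS w N j)"
    by (simp add: atLeast0LessThan lessThan_Suc_atMost)
qed

section \<open>Optimality\<close>

text \<open>Summation by parts: \<open>\<Sum>i<n. c i * x i\<close> is a combination of the partial sums of \<open>x\<close>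
  with the coefficients \<open>c i - c (Suc i)\<close> and \<open>c (n - 1)\<close>, and each of these is either zero or
  multiplies a nonnegative partial sum.\<close>
lemma sum_mult_nonneg_by_parts:
  fixes c x :: "nat \<Rightarrow> real"
  assumes "\<forall>i<n. 0 \<le> c i"
    and "\<forall>i. Suc i < n \<longrightarrow> c (Suc i) \<le> c i"
    and "\<forall>i<n. (Suc i < n \<and> c (Suc i) = c i) \<or> 0 \<le> (\<Sum>j\<le>i. x j)"
  shows "0 \<le> (\<Sum>i<n. c i * x i)"
proof (cases n)
  case (Suc m)
  have partial: "c i * (\<Sum>j\<le>i. x j) \<le> (\<Sum>j\<le>i. c j * x j)" if "i < n" for i
    using that
  proof (induction i)
    case (Suc i)
    have "0 \<le> (c i - c (Suc i)) * (\<Sum>j\<le>i. x j)"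
    proof (cases "c (Suc i) = c i")
      case False
      then have "0 \<le> (\<Sum>j\<le>i. x j)" using assms(3)[rule_format, of i] Suc.prems by auto
      then show ?thesis using assms(2) Suc.prems by simp
    qed simp
    then show ?case using Suc by (simp add: algebra_simps)
  qed simp
  have "0 \<le> c m * (\<Sum>j\<le>m. x j)"
    using assms(1)[rule_format, of m] assms(3)[rule_format, of m] Suc by simp
  also have "\<dots> \<le> (\<Sum>i<n. c i * x i)"
    using partial[of m] Suc by (simp add: lessThan_Suc_atMost)
  finally show ?thesis .
qed simp

lemma LS_optimal:
  assumes G: "convex_on {0..} G" "mono_on {0..} G"
    and w: "\<forall>i<N. 0 < w i" and u: "feasible w N u"
  shows "(\<Sum>k<N. G (LS w N k)) \<le> (\<Sum>k<N. G (u k))"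
proof -
  let ?L = "LS w N"
  let ?c = "\<lambda>k. left_slope G (?L k)"
  have "0 \<le> (\<Sum>k<N. ?c k * (u k - ?L k))"
  proof (rule sum_mult_nonneg_by_parts; intro allI impI)
    fix k assume "k < N"
    then show "0 \<le> ?c k"
      using G LS_pos[OF w] by (intro left_slope_nonneg) auto
  next
    fix k assume "Suc k < N"
    then show "?c (Suc k) \<le> ?c k"
      using G LS_pos[OF w] LS_antimono by (intro left_slope_mono) auto
  next
    fix k assume "k < N"
    then have "(\<Sum>j\<le>k. w j) \<le> (\<Sum>j\<le>k. u j)"
      using u unfolding feasible_def by blast
    moreover have "(Suc k < N \<and> ?L (Suc k) = ?L k) \<or> (\<Sum>j\<le>k. ?L j) = (\<Sum>j\<le>k. w j)"
      using ls_from_const_or_tight[of 0 k N w] \<open>k < N\<close>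
      unfolding LS_def by (simp add: atLeast0LessThan lessThan_Suc_atMost)
    ultimately show "(Suc k < N \<and> ?c (Suc k) = ?c k) \<or> 0 \<le> (\<Sum>j\<le>k. u j - ?L j)"
      by (auto simp: sum_subtractf)
  qed
  moreover have "(\<Sum>k<N. G (?L k) + ?c k * (u k - ?L k)) \<le> (\<Sum>k<N. G (u k))"
    using G(1) LS_pos[OF w] u unfolding feasible_def
    by (intro sum_mono convex_on_left_slope_le) auto
  ultimately show ?thesis
    by (simp add: sum.distrib)
qed

lemma feasible_midpoint:
  assumes "feasible w N u" "feasible w N v"
  shows "feasible w N (\<lambda>k. (u k + v k) / 2)"
  unfolding feasible_def
proof (intro conjI allI impI)
  fix k assume "k < N"
  then show "0 \<le> (u k + v k) / 2"
    using assms unfolding feasible_def by simp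
  have "(\<Sum>j\<le>k. w j) \<le> (\<Sum>j\<le>k. u j)" "(\<Sum>j\<le>k. w j) \<le> (\<Sum>j\<le>k. v j)"
    using assms \<open>k < N\<close> unfolding feasible_def by auto
  then show "(\<Sum>j\<le>k. w j) \<le> (\<Sum>j\<le>k. (u j + v j) / 2)"
    by (simp add: sum_divide_distrib[symmetric] sum.distrib)
qed

lemma feasible_minimiser_unique:
  assumes G: "strict_convex_on {0..} G"
    and u: "feasible w N u" and min: "\<forall>z. feasible w N z \<longrightarrow> (\<Sum>k<N. G (u k)) \<le> (\<Sum>k<N. G (z k))"
    and v: "feasible w N v" and eq: "(\<Sum>k<N. G (v k)) = (\<Sum>k<N. G (u k))"
  shows "\<forall>k<N. v k = u k"
proof (rule ccontr)
  assume "\<not> (\<forall>k<N. v k = u k)"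
  then obtain k0 where "k0 < N" "v k0 \<noteq> u k0" by auto
  have nonneg: "0 \<le> u k" "0 \<le> v k" if "k < N" for k
    using u v that unfolding feasible_def by auto
  have "(\<Sum>k<N. G ((v k + u k) / 2)) < (\<Sum>k<N. (G (v k) + G (u k)) / 2)"
  proof (rule sum_strict_mono_ex1)
    show "\<forall>k\<in>{..<N}. G ((v k + u k) / 2) \<le> (G (v k) + G (u k)) / 2"
      using strict_convex_on_midpoint[OF G] nonneg by (force simp: less_imp_le)
    show "\<exists>k\<in>{..<N}. G ((v k + u k) / 2) < (G (v k) + G (u k)) / 2"
      using strict_convex_on_midpoint[OF G] nonneg \<open>k0 < N\<close> \<open>v k0 \<noteq> u k0\<close>
      by (intro bexI[of _ k0]) auto
  qed simp
  also have "\<dots> = (\<Sum>k<N. G (u k))"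
    using eq by (simp add: sum_divide_distrib[symmetric] sum.distrib)
  finally show False
    using min feasible_midpoint[OF v u] by fastforce
qed

theorem theorem1:
  fixes N :: nat and G :: "real \<Rightarrow> real" and w :: "nat \<Rightarrow> real"
  assumes "N \<ge> 1"
    and "strict_convex_on {0..} G"
    and "mono_on {0..} G"
    and "\<forall>x\<ge>0. G x \<ge> 0"
    and "G 0 = 0"
    and "\<forall>k<N. w k > 0"
  shows "feasible w N (LS w N)
    \<and> (\<forall>u. feasible w N u \<longrightarrow> (\<Sum>k<N. G (LS w N k)) \<le> (\<Sum>k<N. G (u k)))
    \<and> (\<forall>u. feasible w N u \<longrightarrow> (\<Sum>k<N. G (u k)) = (\<Sum>k<N. G (LS w N k))
           \<longrightarrow> (\<forall>k<N. u k = LS w N k))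
    \<and> (\<forall>k. k + 1 < N \<longrightarrow> LS w N (k + 1) \<le> LS w N k)"
proof -
  have feasible: "feasible w N (LS w N)"
    using assms(6) by (rule feasible_LS)
  have optimal: "\<forall>u. feasible w N u \<longrightarrow> (\<Sum>k<N. G (LS w N k)) \<le> (\<Sum>k<N. G (u k))"
    using LS_optimal[OF strict_convex_on_imp_convex_on[OF assms(2)] assms(3,6)] by blast
  have unique: "\<forall>u. feasible w N u \<longrightarrow> (\<Sum>k<N. G (u k)) = (\<Sum>k<N. G (LS w N k))
      \<longrightarrow> (\<forall>k<N. u k = LS w N k)"
    using feasible_minimiser_unique[OF assms(2) feasible optimal] by blast
  have antimono: "\<forall>k. k + 1 < N \<longrightarrow> LS w N (k + 1) \<le> LS w N k"
    using LS_antimono by simp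
  show ?thesis
    by (intro conjI feasible optimal unique antimono)
qed

end
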